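(* Let $T$ be an out-branching of a digraph $D$, and let $P=v_0,v_1,\ldots,v_{p-1}$ be a dipath in $T$ such that: (1) $D$ contains no arc $(v_i,v_j)$ with $i+1<j$; (2) no vertex of $P$ is a branch vertex of $T$; (3) every $v_i$ has an in-neighbor in $D$ different from $v_{i-1}$ and $v_{i+1}$. Then $D$ has an out-tree with at least $p/8$ leaves in $V(P)$.
   Context: An out-tree of a digraph $D$ is a subgraph of $D$ that is a tree (ignoring arc directions) in which exactly one vertex, the root, has in-degree $0$ and every other vertex has in-degree $1$; an out-branching is a spanning out-tree. A leaf is a vertex of out-degree $0$ in the out-tree and a branch vertex is a vertex of out-degree at least $2$ in it. A dipath is a sequence of distinct vertices with consecutive arcs $(v_i,v_{i+1})$. *)

theory Defs
  imports Main
begin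

definition digraph :: "'a set \<Rightarrow> ('a \<times> 'a) set \<Rightarrow> bool" where
  "digraph V A \<longleftrightarrow> finite V \<and> A \<subseteq> V \<times> V \<and> (\<forall>v. (v, v) \<notin> A)"

definition out_tree :: "'a set \<Rightarrow> ('a \<times> 'a) set \<Rightarrow> 'a \<Rightarrow> 'a set \<Rightarrow> ('a \<times> 'a) set \<Rightarrow> bool" where
  "out_tree V A r VT AT \<longleftrightarrow>
     VT \<subseteq> V \<and> AT \<subseteq> A \<and> AT \<subseteq> VT \<times> VT \<and> r \<in> VT \<and>
     (\<forall>u. (u, r) \<notin> AT) \<and>
     (\<forall>v \<in> VT - {r}. card {u. (u, v) \<in> AT} = 1) \<and>
     (\<forall>v \<in> VT. (r, v) \<in> AT\<^sup>*)"

definition out_branching :: "'a set \<Rightarrow> ('a \<times> 'a) set \<Rightarrow> 'a \<Rightarrow> ('a \<times> 'a) set \<Rightarrow> bool" where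
  "out_branching V A r AT \<longleftrightarrow> out_tree V A r V AT"

definition leaves :: "'a set \<Rightarrow> ('a \<times> 'a) set \<Rightarrow> 'a set" where
  "leaves VT AT = {v \<in> VT. \<forall>w. (v, w) \<notin> AT}"

definition branch_vertices :: "'a set \<Rightarrow> ('a \<times> 'a) set \<Rightarrow> 'a set" where
  "branch_vertices VT AT = {v \<in> VT. card {w. (v, w) \<in> AT} \<ge> 2}"

definition dipath :: "('a \<times> 'a) set \<Rightarrow> 'a list \<Rightarrow> bool" where
  "dipath AT P \<longleftrightarrow> distinct P \<and> (\<forall>i. i + 1 < length P \<longrightarrow> (P ! i, P ! (i + 1)) \<in> AT)"

end

theory Submission
  imports Defs
begin

text \<open>Write v_i for P ! i and let u_i be an in-neighbour of v_i other than v_(i-1) and v_(i+1);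
  by (1), if u_i lies on P then u_i = v_j with j \<ge> i + 2. Replacing the tree arc into v_i by
  (u_i, v_i) for all i in a set X of positions turns v_(i-1) into a leaf, because v_(i-1) is not a
  branch vertex, unless v_(i-1) is u_y for some y in X. A greedy scan picks X with gaps at most 2
  so that the positions of X not spoiled in this way make up a third of the scanned range. The new arcs
  create no cycle as long as every u_y lies outside the subtree of v_0 or beyond the next chosen
  position. This holds for a set X ending at the last position a whose u_a leaves that subtree,
  giving a + 1 \<le> 3 L leaves; and for the positions after a it holds inside the subtree of
  v_(a+1), with the new tree rooted at its last chosen vertex, giving p \<le> 3 L + a + 2. One of
  the two trees has at least p / 8 leaves on P.\<close>

definition killed :: "(nat \<Rightarrow> bool) \<Rightarrow> (nat \<Rightarrow> nat) \<Rightarrow> nat set \<Rightarrow> nat set" where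
  "killed hit g X = g ` {y \<in> X. hit y}"

text \<open>The outcome of scanning [lo, hi] from left to right and selecting x unless it is killed
  by an already selected position, x - 1 is selected (or x = lo), and x is not forced.\<close>
definition greedy_selection ::
    "nat \<Rightarrow> nat \<Rightarrow> (nat \<Rightarrow> bool) \<Rightarrow> (nat \<Rightarrow> nat) \<Rightarrow> nat set \<Rightarrow> nat set \<Rightarrow> bool" where
  "greedy_selection lo hi hit g F X \<longleftrightarrow> X \<subseteq> {lo..hi} \<and>
     (\<forall>x \<in> {lo..hi}. x \<in> X \<longleftrightarrow> x \<notin> killed hit g X \<or> (lo < x \<and> x - 1 \<notin> X) \<or> x \<in> F)"

fun greedy_prefix :: "nat \<Rightarrow> (nat \<Rightarrow> bool) \<Rightarrow> (nat \<Rightarrow> nat) \<Rightarrow> nat set \<Rightarrow> nat \<Rightarrow> nat set" where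
  "greedy_prefix lo hit g F 0 = {}"
| "greedy_prefix lo hit g F (Suc n) = (let S = greedy_prefix lo hit g F n; x = lo + n in
     if x \<notin> killed hit g S \<or> (0 < n \<and> x - 1 \<notin> S) \<or> x \<in> F then insert x S else S)"

lemma greedy_prefix_subset: "greedy_prefix lo hit g F n \<subseteq> {lo..<lo + n}"
  by (induction n) (auto simp: Let_def)

lemma greedy_prefix_restrict:
  "m \<le> n \<Longrightarrow> greedy_prefix lo hit g F m = greedy_prefix lo hit g F n \<inter> {..<lo + m}"
proof (induction n)
  case (Suc n)
  show ?case
  proof (cases "m = Suc n")
    case True
    then show ?thesis using greedy_prefix_subset[of lo hit g F "Suc n"] by auto
  next
    case False
    then have "m \<le> n" using Suc.prems by simp
    moreover have "greedy_prefix lo hit g F (Suc n) \<inter> {..<lo + m} =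
        greedy_prefix lo hit g F n \<inter> {..<lo + m}"
      using \<open>m \<le> n\<close> by (auto simp: Let_def)
    ultimately show ?thesis using Suc.IH by simp
  qed
qed simp

text \<open>Since a hit position kills only strictly later positions, the decision on position x
  taken by the recursion is the same as the one prescribed by the final set.\<close>
lemma greedy_prefix_selection:
  assumes later: "\<And>y. hit y \<Longrightarrow> y < g y"
  shows "greedy_selection lo hi hit g F (greedy_prefix lo hit g F (Suc hi - lo))"
  unfolding greedy_selection_def
proof (intro conjI ballI)
  let ?X = "greedy_prefix lo hit g F (Suc hi - lo)"
  have "{lo..<lo + (Suc hi - lo)} \<subseteq> {lo..hi}" by auto
  then show "?X \<subseteq> {lo..hi}" using greedy_prefix_subset[of lo hit g F "Suc hi - lo"] by blast
  fix x assume x: "x \<in> {lo..hi}"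
  define k where "k = x - lo"
  have k: "x = lo + k" "Suc k \<le> Suc hi - lo" using x by (auto simp: k_def)
  let ?S = "greedy_prefix lo hit g F k"
  have S: "?S = ?X \<inter> {..<x}"
    using greedy_prefix_restrict[of k "Suc hi - lo" lo hit g F] k by simp
  have "x \<in> ?X \<longleftrightarrow> x \<in> greedy_prefix lo hit g F (Suc k)"
    using greedy_prefix_restrict[of "Suc k" "Suc hi - lo" lo hit g F] k by auto
  also have "\<dots> \<longleftrightarrow> x \<notin> killed hit g ?S \<or> (0 < k \<and> x - 1 \<notin> ?S) \<or> x \<in> F"
  proof -
    have "x \<notin> ?S" using S by simp
    then show ?thesis unfolding k(1) by (simp only: greedy_prefix.simps Let_def) simp
  qed
  finally have "x \<in> ?X \<longleftrightarrow> x \<notin> killed hit g ?S \<or> (0 < k \<and> x - 1 \<notin> ?S) \<or> x \<in> F" .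
  moreover have "x \<in> killed hit g ?S \<longleftrightarrow> x \<in> killed hit g ?X"
    using S later unfolding killed_def by fastforce
  moreover have "0 < k \<longleftrightarrow> lo < x" using k(1) by simp
  moreover have "x - 1 \<in> ?S \<longleftrightarrow> x - 1 \<in> ?X" if "lo < x" using S that by auto
  ultimately show "x \<in> ?X \<longleftrightarrow> x \<notin> killed hit g ?X \<or> (lo < x \<and> x - 1 \<notin> ?X) \<or> x \<in> F"
    by blast
qed

lemma greedy_selection_exists:
  "(\<And>y. hit y \<Longrightarrow> y < g y) \<Longrightarrow> \<exists>X. greedy_selection lo hi hit g F X"
  using greedy_prefix_selection by blast

lemma greedy_selection_finite: "greedy_selection lo hi hit g F X \<Longrightarrow> finite X"
  unfolding greedy_selection_def by (meson finite_atLeastAtMost finite_subset)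

lemma greedy_selection_bounds:
  "greedy_selection lo hi hit g F X \<Longrightarrow> x \<in> X \<Longrightarrow> lo \<le> x \<and> x \<le> hi"
  unfolding greedy_selection_def by auto

lemma greedy_selection_lo:
  assumes "greedy_selection lo hi hit g F X" "lo \<le> hi" "\<And>y. hit y \<Longrightarrow> y < g y"
  shows "lo \<in> X"
proof -
  have "lo \<notin> killed hit g X"
    using assms unfolding greedy_selection_def killed_def by fastforce
  moreover have "lo \<in> {lo..hi}" using assms(2) by simp
  ultimately show ?thesis using assms(1) unfolding greedy_selection_def by blast
qed

lemma greedy_selection_forced:
  "greedy_selection lo hi hit g F X \<Longrightarrow> F \<subseteq> {lo..hi} \<Longrightarrow> F \<subseteq> X"
  unfolding greedy_selection_def by blast

lemma greedy_selection_gap: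
  assumes X: "greedy_selection lo hi hit g F X" and y: "y \<in> X" and z: "z \<in> X" "y < z"
  shows "\<exists>z' \<in> X. y < z' \<and> z' \<le> y + 2"
proof (rule ccontr)
  assume "\<not> ?thesis"
  then have gap: "y + 1 \<notin> X" "y + 2 \<notin> X" by force+
  moreover have "z \<noteq> y + 1" "z \<noteq> y + 2" using z gap by auto
  ultimately have "y + 2 < z" using z by linarith
  then have "y + 2 \<in> {lo..hi}" "lo < y + 2" using X y z unfolding greedy_selection_def by auto
  then have "y + 1 \<in> X" using X gap(2) unfolding greedy_selection_def by fastforce
  then show False using gap(1) by simp
qed

lemma greedy_selection_Max:
  assumes X: "greedy_selection lo hi hit g F X" and lo: "lo \<in> X"
  shows "hi \<le> Max X + 1"
proof -
  have fin: "finite X" using X by (rule greedy_selection_finite)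
  show ?thesis
  proof (cases "hi \<in> X")
    case True
    then show ?thesis using Max_ge[OF fin] by fastforce
  next
    case False
    have "lo \<le> hi" using X lo unfolding greedy_selection_def by auto
    with False lo have "lo < hi" "hi \<in> {lo..hi}" by (auto simp: order.order_iff_strict)
    then have "hi - 1 \<in> X" using X False unfolding greedy_selection_def by blast
    then show ?thesis using Max_ge[OF fin] by fastforce
  qed
qed

text \<open>Every unselected position and every killed selected one is killed by an element of X other
  than e.\<close>
lemma greedy_selection_few_killed:
  assumes X: "greedy_selection lo hi hit g F X" and e: "e \<in> X" "\<not> (hit e \<and> g e \<le> hi)"
  shows "card ({lo..hi} - X) + card (X \<inter> killed hit g X) < card X"
proof -
  define K where "K = {y \<in> X. hit y \<and> g y \<le> hi}"
  have fin: "finite X" "finite K" using greedy_selection_finite[OF X] by (auto simp: K_def)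
  have "({lo..hi} - X) \<union> (X \<inter> killed hit g X) \<subseteq> g ` K"
    using X unfolding greedy_selection_def killed_def K_def by auto
  then have "card (({lo..hi} - X) \<union> (X \<inter> killed hit g X)) \<le> card K"
    using fin card_mono[OF finite_imageI] card_image_le order_trans by metis
  moreover have "card (({lo..hi} - X) \<union> (X \<inter> killed hit g X))
      = card ({lo..hi} - X) + card (X \<inter> killed hit g X)"
    using fin by (intro card_Un_disjoint) auto
  moreover have "card K < card X" using e fin by (intro psubset_card_mono) (auto simp: K_def)
  ultimately show ?thesis by linarith
qed

text \<open>A killed selected position that is not forced comes right after an unselected one.\<close>
lemma greedy_selection_killed_after_gap:
  assumes X: "greedy_selection lo hi hit g F X" and F: "F \<subseteq> {lo..hi}"
  shows "card (X \<inter> killed hit g X) \<le> card ({lo..hi} - X) + card F"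
proof -
  let ?Bad = "X \<inter> killed hit g X"
  have fin: "finite X" using greedy_selection_finite[OF X] .
  have gap: "lo < x \<and> x - 1 \<in> {lo..hi} - X" if "x \<in> ?Bad - F" for x
  proof -
    have "x \<in> {lo..hi}" "x \<in> X" "x \<in> killed hit g X" "x \<notin> F"
      using that greedy_selection_bounds[OF X] by auto
    then show ?thesis using X unfolding greedy_selection_def by auto
  qed
  have "inj_on (\<lambda>x. x - 1) (?Bad - F)"
  proof (rule inj_onI)
    fix x y assume "x \<in> ?Bad - F" "y \<in> ?Bad - F" "x - 1 = y - 1"
    moreover have "lo < x" "lo < y" using gap calculation(1,2) by blast+
    ultimately show "x = y" by simp
  qed
  moreover have "(\<lambda>x. x - 1) ` (?Bad - F) \<subseteq> {lo..hi} - X" using gap by blast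
  ultimately have "card (?Bad - F) \<le> card ({lo..hi} - X)" by (simp add: card_inj_on_le)
  moreover have "card ?Bad \<le> card ((?Bad - F) \<union> F)"
    using fin F by (intro card_mono) (auto intro: finite_subset)
  ultimately show ?thesis using card_Un_le[of "?Bad - F" F] by linarith
qed

lemma greedy_selection_card:
  assumes X: "greedy_selection lo hi hit g F X" and F: "F \<subseteq> {lo..hi}"
    and e: "e \<in> X" "\<not> (hit e \<and> g e \<le> hi)"
  shows "Suc hi - lo + 2 \<le> 3 * card (X - killed hit g X) + card F"
proof -
  have fin: "finite X" using greedy_selection_finite[OF X] .
  have split_X: "card X = card (X - killed hit g X) + card (X \<inter> killed hit g X)"
    using fin card_Int_Diff[of X "killed hit g X"] by simp
  have "card {lo..hi} = card X + card ({lo..hi} - X)"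
    using X fin card_Diff_subset[of X "{lo..hi}"] card_mono[of "{lo..hi}" X]
    by (simp add: greedy_selection_def)
  then show ?thesis
    using split_X greedy_selection_few_killed[OF X e] greedy_selection_killed_after_gap[OF X F]
    by simp
qed

lemma out_tree_if_rank_increasing:
  fixes rank :: "'a \<Rightarrow> nat"
  assumes "VT \<subseteq> V" "AR \<subseteq> A" "AR \<subseteq> VT \<times> VT" "\<rho> \<in> VT" "\<forall>a. (a, \<rho>) \<notin> AR"
    and indeg: "\<forall>c \<in> VT - {\<rho>}. card {a. (a, c) \<in> AR} = 1"
    and rank: "\<And>a c. (a, c) \<in> AR \<Longrightarrow> rank a < rank c"
  shows "out_tree V A \<rho> VT AR"
proof -
  have "(\<rho>, c) \<in> AR\<^sup>*" if "c \<in> VT" for c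
    using that
  proof (induction "rank c" arbitrary: c rule: less_induct)
    case less
    show ?case
    proof (cases "c = \<rho>")
      case False
      then obtain a where "{a. (a, c) \<in> AR} = {a}"
        using indeg less.prems by (metis DiffI card_1_singletonE singletonD)
      then have a: "(a, c) \<in> AR" by blast
      then have "(\<rho>, a) \<in> AR\<^sup>*" using less.hyps rank assms(3) by blast
      then show ?thesis using a by (rule rtrancl_into_rtrancl)
    qed simp
  qed
  then show ?thesis using assms unfolding out_tree_def by blast
qed

lemma out_tree_singleton: "v \<in> V \<Longrightarrow> out_tree V A v {v} {}"
  unfolding out_tree_def by auto

locale out_branching_digraph =
  fixes V :: "'a set" and A :: "('a \<times> 'a) set" and r :: 'a and AT :: "('a \<times> 'a) set"
  assumes digraph: "digraph V A" and branching: "out_branching V A r AT"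
begin

lemma AT_subset_A: "AT \<subseteq> A" and AT_subset: "AT \<subseteq> V \<times> V" and root_in: "r \<in> V"
  and no_arc_into_root: "(u, r) \<notin> AT"
  and indegree_one: "v \<in> V \<Longrightarrow> v \<noteq> r \<Longrightarrow> card {u. (u, v) \<in> AT} = 1"
  using branching unfolding out_branching_def out_tree_def by auto

lemma finite_vertices: "finite V" and A_subset: "A \<subseteq> V \<times> V" and no_loop: "(v, v) \<notin> A"
  using digraph unfolding digraph_def by auto

lemma reachable_from_root: "v \<in> V \<Longrightarrow> (r, v) \<in> AT\<^sup>*"
  using branching unfolding out_branching_def out_tree_def by auto

lemma parent_unique:
  assumes "(a, c) \<in> AT" "(b, c) \<in> AT"
  shows "a = b"
proof -
  have "c \<in> V" "c \<noteq> r" using assms(1) AT_subset no_arc_into_root by auto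
  then obtain x where x: "{u. (u, c) \<in> AT} = {x}"
    using indegree_one by (metis card_1_singletonE)
  have "a \<in> {u. (u, c) \<in> AT}" "b \<in> {u. (u, c) \<in> AT}" using assms by simp_all
  then show ?thesis unfolding x by simp
qed

lemma acyclic_from_root: "(r, v) \<in> AT\<^sup>* \<Longrightarrow> (v, v) \<notin> AT\<^sup>+"
proof (induction rule: rtrancl_induct)
  case base
  show ?case using no_arc_into_root by (metis tranclE)
next
  case (step y z)
  show ?case
  proof
    assume "(z, z) \<in> AT\<^sup>+"
    then obtain w where w: "(z, w) \<in> AT\<^sup>*" "(w, z) \<in> AT" by (meson tranclD2)
    then have "w = y" using parent_unique step(2) by blast
    then have "(y, y) \<in> AT\<^sup>+" using step(2) w(1) by (meson rtrancl_into_trancl2)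
    then show False using step(3) by simp
  qed
qed

lemma no_cycle: "(x, x) \<notin> AT\<^sup>+"
proof
  assume cycle: "(x, x) \<in> AT\<^sup>+"
  then obtain z where "(x, z) \<in> AT" by (meson tranclE trancl_into_rtrancl converse_tranclE)
  then have "x \<in> V" using AT_subset by auto
  then show False using acyclic_from_root[OF reachable_from_root] cycle by blast
qed

lemma arc_not_reversible: "(a, c) \<in> AT \<Longrightarrow> (c, a) \<notin> AT\<^sup>*"
  using no_cycle by (meson rtrancl_into_trancl1)

definition descendants :: "'a \<Rightarrow> 'a set" where
  "descendants x = {y. (x, y) \<in> AT\<^sup>*}"

lemma descendants_closed: "a \<in> descendants w \<Longrightarrow> (a, c) \<in> AT \<Longrightarrow> c \<in> descendants w"
  unfolding descendants_def by (auto intro: rtrancl_into_rtrancl)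

lemma descendants_trans: "v \<in> descendants w \<Longrightarrow> descendants v \<subseteq> descendants w"
  unfolding descendants_def by (auto intro: rtrancl_trans)

lemma descendant_parent:
  assumes "c \<in> descendants w" "c \<noteq> w" "(a, c) \<in> AT"
  shows "a \<in> descendants w"
proof -
  obtain a' where "(w, a') \<in> AT\<^sup>*" "(a', c) \<in> AT"
    using assms(1,2) unfolding descendants_def by (auto elim: rtranclE)
  then show ?thesis using parent_unique assms(3) unfolding descendants_def by blast
qed

lemma proper_descendant_not_root: "c \<in> descendants w \<Longrightarrow> c \<noteq> w \<Longrightarrow> c \<noteq> r"
  using no_arc_into_root unfolding descendants_def by (auto elim: rtranclE)

lemma descendants_subset: "x \<in> V \<Longrightarrow> descendants x \<subseteq> V"
proof
  fix y assume "x \<in> V" "y \<in> descendants x"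
  then have "(x, y) \<in> AT\<^sup>*" unfolding descendants_def by simp
  then show "y \<in> V" using \<open>x \<in> V\<close> AT_subset by (induction rule: rtrancl_induct) auto
qed

definition depth :: "'a \<Rightarrow> nat" where
  "depth v = card {a. (a, v) \<in> AT\<^sup>*}"

lemma ancestors_subset: "v \<in> V \<Longrightarrow> {a. (a, v) \<in> AT\<^sup>*} \<subseteq> V"
proof
  fix a assume "v \<in> V" "a \<in> {a. (a, v) \<in> AT\<^sup>*}"
  then have "(a, v) \<in> AT\<^sup>*" by simp
  then show "a \<in> V" using \<open>v \<in> V\<close> AT_subset by (induction rule: converse_rtrancl_induct) auto
qed

lemma depth_le_card: "v \<in> V \<Longrightarrow> depth v \<le> card V"
  unfolding depth_def using ancestors_subset finite_vertices by (simp add: card_mono)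

lemma depth_increasing:
  assumes "(a, c) \<in> AT"
  shows "depth a < depth c"
proof -
  have "c \<in> V" using assms AT_subset by auto
  then have "finite {x. (x, c) \<in> AT\<^sup>*}" using ancestors_subset finite_vertices finite_subset by blast
  moreover have "{x. (x, a) \<in> AT\<^sup>*} \<subset> {x. (x, c) \<in> AT\<^sup>*}"
    using assms arc_not_reversible[OF assms] by auto
  ultimately show ?thesis unfolding depth_def by (simp add: psubset_card_mono)
qed

end

locale bare_path = out_branching_digraph +
  fixes P :: "'a list"
  assumes path: "dipath AT P"
    and no_long_arcs: "\<forall>i j. i + 1 < j \<and> j < length P \<longrightarrow> (P ! i, P ! j) \<notin> A"
    and no_branch: "\<forall>v \<in> set P. v \<notin> branch_vertices V AT"
    and in_nbr: "\<forall>i < length P. \<exists>u. (u, P ! i) \<in> A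
                    \<and> (i > 0 \<longrightarrow> u \<noteq> P ! (i - 1))
                    \<and> (i + 1 < length P \<longrightarrow> u \<noteq> P ! (i + 1))"
    and nonempty: "P \<noteq> []"
begin

abbreviation p :: nat where "p \<equiv> length P"

lemma path_arc: "Suc i < p \<Longrightarrow> (P ! i, P ! Suc i) \<in> AT"
  using path unfolding dipath_def by auto

lemma path_nth_inj: "i < p \<Longrightarrow> j < p \<Longrightarrow> P ! i = P ! j \<Longrightarrow> i = j"
  using path unfolding dipath_def by (simp add: nth_eq_iff_index_eq)

definition extra_in :: "nat \<Rightarrow> 'a" where
  "extra_in i = (SOME u. (u, P ! i) \<in> A \<and> (i > 0 \<longrightarrow> u \<noteq> P ! (i - 1))
                        \<and> (i + 1 < p \<longrightarrow> u \<noteq> P ! (i + 1)))"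

lemma extra_in:
  assumes "i < p"
  shows "(extra_in i, P ! i) \<in> A" "i > 0 \<Longrightarrow> extra_in i \<noteq> P ! (i - 1)"
    "i + 1 < p \<Longrightarrow> extra_in i \<noteq> P ! (i + 1)"
  using someI_ex[OF in_nbr[rule_format, OF assms]] unfolding extra_in_def by auto

lemma path_in_V: "i < p \<Longrightarrow> P ! i \<in> V" and extra_in_in_V: "i < p \<Longrightarrow> extra_in i \<in> V"
  using extra_in(1) A_subset by blast+

lemma extra_in_on_path:
  assumes "i < p" "extra_in i \<in> set P"
  shows "\<exists>j. extra_in i = P ! j \<and> i + 2 \<le> j \<and> j < p"
proof -
  obtain j where j: "j < p" "extra_in i = P ! j" using assms(2) by (auto simp: in_set_conv_nth)
  have "j \<noteq> i" using no_loop extra_in(1)[OF assms(1)] j by auto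
  moreover have "j \<noteq> i + 1" using extra_in(3)[OF assms(1)] j by auto
  moreover have "\<not> j + 1 < i" using no_long_arcs assms(1) extra_in(1)[OF assms(1)] j by auto
  moreover have "j \<noteq> i - 1 \<or> i = 0" using extra_in(2)[OF assms(1)] j by auto
  ultimately show ?thesis using j by (intro exI[of _ j]) auto
qed

lemma path_reaches: "i \<le> j \<Longrightarrow> j < p \<Longrightarrow> (P ! i, P ! j) \<in> AT\<^sup>*"
proof (induction j)
  case (Suc j)
  then show ?case using path_arc[of j] by (cases "i = Suc j") (auto intro: rtrancl_into_rtrancl)
qed simp

lemma path_only_child:
  assumes "Suc i < p" "(P ! i, w) \<in> AT"
  shows "w = P ! Suc i"
proof (rule ccontr)
  assume ne: "w \<noteq> P ! Suc i"
  have "P ! i \<in> V" "P ! i \<in> set P" using assms(1) path_in_V by auto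
  then have "card {x. (P ! i, x) \<in> AT} < 2" using no_branch unfolding branch_vertices_def by auto
  moreover have "finite {x. (P ! i, x) \<in> AT}"
    using finite_vertices AT_subset by (auto intro: finite_subset)
  moreover have "{w, P ! Suc i} \<subseteq> {x. (P ! i, x) \<in> AT}" using assms path_arc by auto
  ultimately show False using ne card_mono[of _ "{w, P ! Suc i}"] by fastforce
qed

lemma path_parent: "0 < i \<Longrightarrow> i < p \<Longrightarrow> (a, P ! i) \<in> AT \<Longrightarrow> a = P ! (i - 1)"
  using parent_unique path_arc[of "i - 1"] by simp

abbreviation path_subtree :: "'a set" where
  "path_subtree \<equiv> descendants (P ! 0)"

lemma path_in_subtree: "i < p \<Longrightarrow> P ! i \<in> path_subtree"
  unfolding descendants_def using path_reaches by simp

lemma set_path_subset_subtree: "set P \<subseteq> path_subtree"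
  using path_in_subtree by (auto simp: in_set_conv_nth)

lemma path_subtree_cases:
  assumes "c \<in> path_subtree"
  shows "c \<in> set P \<or> c \<in> descendants (P ! (p - 1))"
proof -
  have "(P ! 0, c) \<in> AT\<^sup>*" using assms unfolding descendants_def by simp
  then show ?thesis
  proof (induction rule: rtrancl_induct)
    case base
    then show ?case using nonempty by simp
  next
    case (step y z)
    from step(3) show ?case
    proof
      assume "y \<in> set P"
      then obtain i where i: "i < p" "y = P ! i" by (auto simp: in_set_conv_nth)
      show ?thesis
      proof (cases "Suc i < p")
        case True
        then show ?thesis using path_only_child[of i z] step(2) i by simp
      next
        case False
        then have "i = p - 1" using i by simp
        then show ?thesis using step(2) i by (auto simp: descendants_def)
      qed
    qed (use step(2) descendants_closed in blast)
  qed
qed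

text \<open>Every vertex off the path counts as lying at the end of P.\<close>
definition position :: "'a \<Rightarrow> nat" where
  "position v = (if v \<in> set P then (THE i. i < p \<and> P ! i = v) else p - 1)"

lemma position_nth: "i < p \<Longrightarrow> position (P ! i) = i"
  unfolding position_def using path_nth_inj by (auto intro!: the_equality)

lemma position_less: "position v < p"
proof (cases "v \<in> set P")
  case True
  then obtain i where "i < p" "v = P ! i" by (auto simp: in_set_conv_nth)
  then show ?thesis using position_nth by simp
qed (use nonempty in \<open>simp add: position_def\<close>)

text \<open>If the extra in-neighbour of P ! y lies on P, using it as the new parent of P ! y gives
  P ! (spoiled y - 1) a child and so keeps it from becoming a leaf.\<close>
definition hits_path :: "nat \<Rightarrow> bool" where
  "hits_path y \<longleftrightarrow> y < p \<and> extra_in y \<in> set P"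

definition spoiled :: "nat \<Rightarrow> nat" where
  "spoiled y = Suc (position (extra_in y))"

lemma spoiled_ahead: "hits_path y \<Longrightarrow> y + 3 \<le> spoiled y"
  unfolding hits_path_def spoiled_def using extra_in_on_path position_nth by fastforce

lemma spoiled_later: "hits_path y \<Longrightarrow> y < spoiled y"
  using spoiled_ahead by fastforce

lemma spoiled_if_extra_in:
  assumes "y < p" "0 < x" "x - 1 < p" "extra_in y = P ! (x - 1)"
  shows "hits_path y \<and> spoiled y = x"
  using assms position_nth[of "x - 1"] unfolding hits_path_def spoiled_def by auto

definition last_selected :: "nat set \<Rightarrow> 'a \<Rightarrow> nat" where
  "last_selected X v = Max (insert 0 {x \<in> X. x \<le> position v})"

definition level :: "nat set \<Rightarrow> 'a \<Rightarrow> nat" where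
  "level X v = (if v \<in> path_subtree then Suc (p - last_selected X v) else 0)"

text \<open>Arcs of the rerouted trees increase the rank, which is lexicographic in
  (level, depth) because depth never exceeds card V.\<close>
definition rank :: "nat set \<Rightarrow> 'a \<Rightarrow> nat" where
  "rank X v = level X v * Suc (card V) + depth v"

lemma last_selected_le: "finite X \<Longrightarrow> last_selected X v \<le> position v"
  unfolding last_selected_def by (subst Max_le_iff) auto

lemma last_selected_ge: "finite X \<Longrightarrow> z \<in> X \<Longrightarrow> z \<le> position v \<Longrightarrow> z \<le> last_selected X v"
  unfolding last_selected_def by (rule Max_ge) auto

lemma last_selected_nth: "finite X \<Longrightarrow> y \<in> X \<Longrightarrow> y < p \<Longrightarrow> last_selected X (P ! y) = y"
  using last_selected_le[of X "P ! y"] last_selected_ge[of X y "P ! y"] position_nth by simp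

lemma level_tree_arc:
  assumes X: "finite X" and arc: "(a, c) \<in> AT" and c: "c \<notin> nth P ` X"
  shows "level X a \<le> level X c"
proof (cases "a \<in> path_subtree")
  case a: True
  then have c_sub: "c \<in> path_subtree" using descendants_closed arc by blast
  have "{x \<in> X. x \<le> position c} \<subseteq> {x \<in> X. x \<le> position a}"
  proof (cases "c \<in> set P")
    case True
    then obtain i where i: "i < p" "c = P ! i" by (auto simp: in_set_conv_nth)
    have "i \<noteq> 0"
    proof
      assume "i = 0"
      then have "(c, a) \<in> AT\<^sup>*" using a i unfolding descendants_def by simp
      then show False using arc_not_reversible arc by blast
    qed
    then have "a = P ! (i - 1)" using path_parent i arc by simp
    then have "position a = i - 1" "position c = i" using i position_nth by auto
    moreover have "i \<notin> X" using c i by auto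
    ultimately show ?thesis by (auto simp: le_less)
  next
    case False
    have "position a = p - 1"
    proof (cases "a \<in> set P")
      case True
      then obtain j where j: "j < p" "a = P ! j" by (auto simp: in_set_conv_nth)
      then have "\<not> Suc j < p" using path_only_child arc False by fastforce
      then show ?thesis using j position_nth by simp
    qed (simp add: position_def)
    then show ?thesis using False by (simp add: position_def)
  qed
  then have "last_selected X c \<le> last_selected X a"
    unfolding last_selected_def using X by (intro Max_mono) auto
  then show ?thesis unfolding level_def using a c_sub by simp
qed (simp add: level_def)

lemma level_extra_arc:
  assumes X: "finite X" "X \<subseteq> {..<p}" and y: "y \<in> X"
    and next_selected: "extra_in y \<notin> path_subtree \<or> (\<exists>z \<in> X. y < z \<and> z \<le> y + 2)"
  shows "level X (extra_in y) < level X (P ! y)"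
proof -
  have yp: "y < p" using y X by auto
  have level_y: "level X (P ! y) = Suc (p - y)"
    unfolding level_def using path_in_subtree[OF yp] last_selected_nth[OF X(1) y yp] by simp
  show ?thesis
  proof (cases "extra_in y \<in> path_subtree")
    case True
    then obtain z where z: "z \<in> X" "y < z" "z \<le> y + 2" using next_selected by blast
    have "z \<le> position (extra_in y)"
    proof (cases "extra_in y \<in> set P")
      case True
      then show ?thesis using extra_in_on_path yp position_nth z by fastforce
    qed (use z X in \<open>auto simp: position_def\<close>)
    then have "z \<le> last_selected X (extra_in y)" using last_selected_ge X z by blast
    moreover have "last_selected X (extra_in y) < p"
      using last_selected_le[OF X(1)] position_less le_less_trans by blast
    ultimately show ?thesis unfolding level_y unfolding level_def using True z by simp
  qed (use path_in_subtree[OF yp] in \<open>simp add: level_def\<close>)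
qed

lemma rank_less_if_depth_less:
  "level X a \<le> level X c \<Longrightarrow> depth a < depth c \<Longrightarrow> rank X a < rank X c"
  unfolding rank_def using mult_right_mono[of "level X a" "level X c" "Suc (card V)"] by linarith

lemma rank_less_if_level_less:
  assumes "a \<in> V" "level X a < level X c"
  shows "rank X a < rank X c"
proof -
  have "(level X a + 1) * Suc (card V) \<le> level X c * Suc (card V)"
    using assms(2) by (intro mult_right_mono) auto
  moreover have "depth a \<le> card V" using depth_le_card assms(1) .
  ultimately show ?thesis unfolding rank_def by (simp add: algebra_simps)
qed

definition rerouted :: "'a set \<Rightarrow> nat set \<Rightarrow> nat set \<Rightarrow> ('a \<times> 'a) set" where
  "rerouted S Y R =
     {(a, c) \<in> AT. a \<in> S \<and> c \<in> S \<and> c \<notin> nth P ` Y} \<union> (\<lambda>y. (extra_in y, P ! y)) ` R"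

lemma rerouted_subset_arcs: "R \<subseteq> {..<p} \<Longrightarrow> rerouted S Y R \<subseteq> A"
  unfolding rerouted_def using AT_subset_A extra_in(1) by auto

lemma rerouted_subset_square:
  "(\<And>y. y \<in> R \<Longrightarrow> extra_in y \<in> S \<and> P ! y \<in> S) \<Longrightarrow> rerouted S Y R \<subseteq> S \<times> S"
  unfolding rerouted_def by auto

lemma parents_rerouted_selected:
  assumes "R \<subseteq> Y" "R \<subseteq> {..<p}" "y \<in> R"
  shows "{a. (a, P ! y) \<in> rerouted S Y R} = {extra_in y}"
proof (intro set_eqI iffI)
  fix a assume a: "a \<in> {a. (a, P ! y) \<in> rerouted S Y R}"
  have "P ! y \<in> nth P ` Y" using assms by auto
  with a obtain y' where "y' \<in> R" "a = extra_in y'" "P ! y = P ! y'"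
    unfolding rerouted_def by auto
  then show "a \<in> {extra_in y}" using assms path_nth_inj[of y y'] by auto
qed (use assms in \<open>auto simp: rerouted_def\<close>)

lemma parents_rerouted_unselected:
  assumes "R \<subseteq> Y" "c \<notin> nth P ` Y" "c \<in> S"
  shows "{a. (a, c) \<in> rerouted S Y R} = {a \<in> S. (a, c) \<in> AT}"
  using assms unfolding rerouted_def by auto

lemma rerouted_rank_increasing:
  assumes Y: "finite Y" "Y \<subseteq> {..<p}" and R: "R \<subseteq> Y"
    and next_selected: "\<forall>y \<in> R. extra_in y \<notin> path_subtree \<or> (\<exists>z \<in> Y. y < z \<and> z \<le> y + 2)"
    and arc: "(a, c) \<in> rerouted S Y R"
  shows "rank Y a < rank Y c"
  using arc unfolding rerouted_def
proof
  assume "(a, c) \<in> {(a, c) \<in> AT. a \<in> S \<and> c \<in> S \<and> c \<notin> nth P ` Y}"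
  then have "(a, c) \<in> AT" "c \<notin> nth P ` Y" by auto
  then show ?thesis
    using level_tree_arc[OF Y(1)] depth_increasing rank_less_if_depth_less by blast
next
  assume "(a, c) \<in> (\<lambda>y. (extra_in y, P ! y)) ` R"
  then obtain y where "y \<in> R" "a = extra_in y" "c = P ! y" by auto
  moreover have "extra_in y \<in> V" using extra_in_in_V \<open>y \<in> R\<close> R Y(2) by blast
  moreover have "level Y (extra_in y) < level Y (P ! y)"
    using level_extra_arc[OF Y, of y] next_selected R \<open>y \<in> R\<close> by blast
  ultimately show ?thesis using rank_less_if_level_less by simp
qed

lemma rerouted_leaf:
  assumes R: "R \<subseteq> {..<p}" and x: "x \<in> Y" "0 < x" "x < p" "P ! (x - 1) \<in> S"
    and not_spoiled: "x \<notin> killed hits_path spoiled R"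
  shows "P ! (x - 1) \<in> leaves S (rerouted S Y R)"
proof -
  have "(P ! (x - 1), w) \<notin> rerouted S Y R" for w
  proof
    assume "(P ! (x - 1), w) \<in> rerouted S Y R"
    then consider "(P ! (x - 1), w) \<in> AT" "w \<notin> nth P ` Y"
      | y where "y \<in> R" "extra_in y = P ! (x - 1)"
      unfolding rerouted_def by auto
    then show False
    proof cases
      case 1
      then show False using path_only_child[of "x - 1" w] x by auto
    next
      case 2
      then have "hits_path y \<and> spoiled y = x" using spoiled_if_extra_in[of y x] R x by auto
      then show False using \<open>y \<in> R\<close> not_spoiled unfolding killed_def by auto
    qed
  qed
  then show ?thesis unfolding leaves_def using x by auto
qed

lemma path_nth_not_root: "0 < i \<Longrightarrow> i < p \<Longrightarrow> P ! i \<noteq> r"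
  using path_arc[of "i - 1"] no_arc_into_root by (metis Suc_pred')

lemma rerouted_out_branching:
  assumes X: "finite X" "X \<subseteq> {1..<p}"
    and next_selected: "\<forall>y \<in> X. extra_in y \<notin> path_subtree \<or> (\<exists>z \<in> X. y < z \<and> z \<le> y + 2)"
  shows "out_tree V A r V (rerouted V X X)"
proof (rule out_tree_if_rank_increasing[where rank = "rank X"])
  have Xp: "X \<subseteq> {..<p}" using X(2) by auto
  show "rerouted V X X \<subseteq> A" using rerouted_subset_arcs[OF Xp] .
  show "rerouted V X X \<subseteq> V \<times> V"
    using extra_in_in_V path_in_V Xp by (intro rerouted_subset_square) blast
  show "\<forall>a. (a, r) \<notin> rerouted V X X"
  proof (intro allI notI)
    fix a assume "(a, r) \<in> rerouted V X X"
    then obtain y where "y \<in> X" "r = P ! y" using no_arc_into_root unfolding rerouted_def by auto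
    moreover have "0 < y" "y < p" using X(2) \<open>y \<in> X\<close> by auto
    ultimately show False using path_nth_not_root by blast
  qed
  show "\<forall>c \<in> V - {r}. card {a. (a, c) \<in> rerouted V X X} = 1"
  proof
    fix c assume c: "c \<in> V - {r}"
    show "card {a. (a, c) \<in> rerouted V X X} = 1"
    proof (cases "c \<in> nth P ` X")
      case True
      then show ?thesis using parents_rerouted_selected[OF subset_refl Xp] by auto
    next
      case False
      have "{a \<in> V. (a, c) \<in> AT} = {a. (a, c) \<in> AT}" using AT_subset by auto
      then show ?thesis using parents_rerouted_unselected[OF subset_refl False] c indegree_one
        by auto
    qed
  qed
  show "rank X a < rank X c" if "(a, c) \<in> rerouted V X X" for a c
    using rerouted_rank_increasing[OF X(1) Xp subset_refl next_selected that] .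
qed (use root_in in auto)

lemma extra_in_below:
  assumes "lo \<le> y" "y < p" "extra_in y \<in> path_subtree"
  shows "extra_in y \<in> descendants (P ! lo)"
  using path_subtree_cases[OF assms(3)]
proof
  assume "extra_in y \<in> set P"
  then obtain j where "extra_in y = P ! j" "y + 2 \<le> j" "j < p" using extra_in_on_path assms by blast
  then show ?thesis using path_reaches assms by (simp add: descendants_def)
next
  assume "extra_in y \<in> descendants (P ! (p - 1))"
  moreover have "P ! (p - 1) \<in> descendants (P ! lo)"
    using path_reaches assms by (simp add: descendants_def)
  ultimately show ?thesis using descendants_trans by blast
qed

lemma rerouted_out_tree_below:
  assumes X: "finite X" "X \<subseteq> {lo..<p}" "lo \<in> X"
    and inside: "\<forall>y \<in> X. extra_in y \<in> path_subtree"
    and next_selected: "\<forall>y \<in> X - {Max X}. \<exists>z \<in> X. y < z \<and> z \<le> y + 2"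
  defines "S \<equiv> descendants (P ! lo)"
  shows "out_tree V A (P ! Max X) S (rerouted S X (X - {Max X}))"
proof (rule out_tree_if_rank_increasing[where rank = "rank X"])
  have Xp: "X \<subseteq> {..<p}" and lo: "lo < p" using X by auto
  have Max: "Max X \<in> X" using X Max_in by blast
  have path_in_S: "P ! i \<in> S" if "lo \<le> i" "i < p" for i
    using path_reaches that unfolding S_def descendants_def by simp
  show "S \<subseteq> V" unfolding S_def using descendants_subset path_in_V lo by blast
  show "rerouted S X (X - {Max X}) \<subseteq> A" using rerouted_subset_arcs Xp by blast
  show "rerouted S X (X - {Max X}) \<subseteq> S \<times> S"
  proof (rule rerouted_subset_square)
    fix y assume "y \<in> X - {Max X}"
    then have "lo \<le> y" "y < p" "extra_in y \<in> path_subtree" using X(2) inside by auto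
    then show "extra_in y \<in> S \<and> P ! y \<in> S" using extra_in_below path_in_S S_def by blast
  qed
  show "P ! Max X \<in> S" using path_in_S Max X(2) by auto
  show "\<forall>a. (a, P ! Max X) \<notin> rerouted S X (X - {Max X})"
  proof (intro allI notI)
    fix a assume "(a, P ! Max X) \<in> rerouted S X (X - {Max X})"
    then obtain y where "y \<in> X" "y \<noteq> Max X" "P ! Max X = P ! y"
      using Max unfolding rerouted_def by auto
    moreover have "y < p" "Max X < p" using Xp Max \<open>y \<in> X\<close> by auto
    ultimately show False using path_nth_inj by blast
  qed
  show "\<forall>c \<in> S - {P ! Max X}. card {a. (a, c) \<in> rerouted S X (X - {Max X})} = 1"
  proof
    fix c assume c: "c \<in> S - {P ! Max X}"
    show "card {a. (a, c) \<in> rerouted S X (X - {Max X})} = 1"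
    proof (cases "c \<in> nth P ` X")
      case True
      then obtain y where y: "y \<in> X - {Max X}" "c = P ! y" using c by auto
      moreover have "X - {Max X} \<subseteq> {..<p}" using Xp by auto
      ultimately show ?thesis using parents_rerouted_selected[of "X - {Max X}" X y S] by simp
    next
      case False
      then have "c \<noteq> P ! lo" using X(3) by auto
      moreover have cS: "c \<in> S" using c by simp
      ultimately have "{a \<in> S. (a, c) \<in> AT} = {a. (a, c) \<in> AT}" "c \<noteq> r"
        using descendant_parent proper_descendant_not_root unfolding S_def by blast+
      moreover have "c \<in> V" using cS \<open>S \<subseteq> V\<close> by blast
      ultimately show ?thesis using parents_rerouted_unselected[of _ X, OF _ False cS] indegree_one
        by auto
    qed
  qed
  show "rank X a < rank X c" if "(a, c) \<in> rerouted S X (X - {Max X})" for a c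
    using rerouted_rank_increasing[OF X(1) Xp _ _ that] next_selected by blast
qed

lemma card_le_shifted_leaves:
  assumes T: "out_tree V A \<rho> VT AR" and G: "G \<subseteq> {1..<p}"
    and leaf: "\<And>x. x \<in> G \<Longrightarrow> P ! (x - 1) \<in> leaves VT AR"
  shows "card G \<le> card (leaves VT AR \<inter> set P)"
proof (rule card_inj_on_le)
  show "inj_on (\<lambda>x. P ! (x - 1)) G"
  proof (rule inj_onI)
    fix x y assume "x \<in> G" "y \<in> G" "P ! (x - 1) = P ! (y - 1)"
    moreover have "x \<in> {1..<p}" "y \<in> {1..<p}" using G calculation(1,2) by blast+
    ultimately have "x - 1 = y - 1" using path_nth_inj[of "x - 1" "y - 1"] by auto
    then show "x = y" using \<open>x \<in> {1..<p}\<close> \<open>y \<in> {1..<p}\<close> by auto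
  qed
  have "P ! (x - 1) \<in> set P" if "x \<in> G" for x
  proof -
    have "x \<in> {1..<p}" using that G by blast
    then show ?thesis by (intro nth_mem) auto
  qed
  then show "(\<lambda>x. P ! (x - 1)) ` G \<subseteq> leaves VT AR \<inter> set P" using leaf by auto
  have "VT \<subseteq> V" using T unfolding out_tree_def by simp
  then show "finite (leaves VT AR \<inter> set P)"
    using finite_vertices unfolding leaves_def by (auto intro: finite_subset)
qed

lemma leaves_up_to_exit:
  assumes a: "a < p" and exit: "extra_in a \<notin> path_subtree"
  shows "\<exists>\<rho> VT AR. out_tree V A \<rho> VT AR \<and> a + 1 \<le> 3 * card (leaves VT AR \<inter> set P)"
proof (cases "a = 0")
  case True
  have "out_tree V A (P ! 0) {P ! 0} {}" using path_in_V nonempty by (intro out_tree_singleton) simp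
  moreover have "leaves {P ! 0} {} \<inter> set P = {P ! 0}" using nonempty by (auto simp: leaves_def)
  ultimately show ?thesis
    using True by (intro exI[of _ "P ! 0"] exI[of _ "{P ! 0}"] exI[of _ "{}"]) simp
next
  case False
  obtain X where X: "greedy_selection 1 a hits_path spoiled {a} X"
    using greedy_selection_exists[of hits_path spoiled] spoiled_later by blast
  have fin: "finite X" using greedy_selection_finite[OF X] .
  have sub: "X \<subseteq> {1..<p}" using greedy_selection_bounds[OF X] a by fastforce
  have aX: "a \<in> X" using greedy_selection_forced[OF X] False by simp
  have "\<forall>y \<in> X. extra_in y \<notin> path_subtree \<or> (\<exists>z \<in> X. y < z \<and> z \<le> y + 2)"
  proof
    fix y assume y: "y \<in> X"
    then have "y < a \<or> y = a" using greedy_selection_bounds[OF X] by fastforce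
    then show "extra_in y \<notin> path_subtree \<or> (\<exists>z \<in> X. y < z \<and> z \<le> y + 2)"
      using greedy_selection_gap[OF X y aX] exit by blast
  qed
  then have T: "out_tree V A r V (rerouted V X X)" using rerouted_out_branching fin sub by blast
  have "\<not> hits_path a" using exit set_path_subset_subtree unfolding hits_path_def by blast
  then have "Suc a - 1 + 2 \<le> 3 * card (X - killed hits_path spoiled X) + card {a}"
    using greedy_selection_card[OF X _ aX] False by simp
  moreover have "card (X - killed hits_path spoiled X) \<le> card (leaves V (rerouted V X X) \<inter> set P)"
  proof (rule card_le_shifted_leaves[OF T])
    show "X - killed hits_path spoiled X \<subseteq> {1..<p}" using sub by blast
    fix x assume x: "x \<in> X - killed hits_path spoiled X"
    then have "0 < x" "x < p" using sub by force+
    moreover have "X \<subseteq> {..<p}" using sub by auto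
    ultimately show "P ! (x - 1) \<in> leaves V (rerouted V X X)"
      using rerouted_leaf[of X x X V] path_in_V x by simp
  qed
  ultimately show ?thesis using T
    by (intro exI[of _ r] exI[of _ V] exI[of _ "rerouted V X X"]) simp
qed

lemma leaves_beyond:
  assumes lo: "lo < p" and inside: "\<forall>y. lo \<le> y \<and> y < p \<longrightarrow> extra_in y \<in> path_subtree"
  shows "\<exists>\<rho> VT AR. out_tree V A \<rho> VT AR \<and> p \<le> 3 * card (leaves VT AR \<inter> set P) + lo + 1"
proof -
  obtain X where X: "greedy_selection lo (p - 1) hits_path spoiled {} X"
    using greedy_selection_exists[of hits_path spoiled] spoiled_later by blast
  have fin: "finite X" using greedy_selection_finite[OF X] .
  have sub: "X \<subseteq> {lo..<p}" using greedy_selection_bounds[OF X] lo by fastforce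
  have loX: "lo \<in> X" using greedy_selection_lo[OF X] spoiled_later lo by simp
  have Max: "Max X \<in> X" using fin loX Max_in by blast
  define S where "S = descendants (P ! lo)"
  define AR where "AR = rerouted S X (X - {Max X})"
  have "\<forall>y \<in> X - {Max X}. \<exists>z \<in> X. y < z \<and> z \<le> y + 2"
  proof
    fix y assume y: "y \<in> X - {Max X}"
    then have "y < Max X" using Max_ge[OF fin, of y] by auto
    then show "\<exists>z \<in> X. y < z \<and> z \<le> y + 2" using greedy_selection_gap[OF X _ Max] y by blast
  qed
  moreover have "\<forall>y \<in> X. extra_in y \<in> path_subtree" using inside sub by auto
  ultimately have T: "out_tree V A (P ! Max X) S AR"
    unfolding S_def AR_def using rerouted_out_tree_below fin sub loX by blast
  let ?Good = "X - killed hits_path spoiled X - {lo}"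
  have "\<not> (hits_path (Max X) \<and> spoiled (Max X) \<le> p - 1)"
    using greedy_selection_Max[OF X loX] spoiled_ahead by fastforce
  then have "Suc (p - 1) - lo + 2 \<le> 3 * card (X - killed hits_path spoiled X)"
    using greedy_selection_card[OF X _ Max] by simp
  moreover have "card (X - killed hits_path spoiled X) \<le> card ?Good + 1"
    using fin card_Diff_singleton_if[of "X - killed hits_path spoiled X" lo] by auto
  moreover have "card ?Good \<le> card (leaves S AR \<inter> set P)"
  proof (rule card_le_shifted_leaves[OF T])
    show "?Good \<subseteq> {1..<p}" using sub by force
    fix x assume x: "x \<in> ?Good"
    then have "lo \<le> x - 1" "0 < x" "x < p" using sub by force+
    then have "P ! (x - 1) \<in> S" using path_reaches unfolding S_def descendants_def by simp
    moreover have "x \<notin> killed hits_path spoiled (X - {Max X})"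
      using x unfolding killed_def by blast
    moreover have "X - {Max X} \<subseteq> {..<p}" using sub by auto
    ultimately show "P ! (x - 1) \<in> leaves S AR"
      unfolding AR_def using rerouted_leaf[of "X - {Max X}" x X S] x \<open>0 < x\<close> \<open>x < p\<close> by simp
  qed
  ultimately have "p \<le> 3 * card (leaves S AR \<inter> set P) + lo + 1" using lo by linarith
  then show ?thesis using T by blast
qed

lemma last_exit:
  assumes "\<exists>y < p. extra_in y \<notin> path_subtree"
  obtains a where "a < p" "extra_in a \<notin> path_subtree"
    "\<forall>y. a + 1 \<le> y \<and> y < p \<longrightarrow> extra_in y \<in> path_subtree"
proof
  let ?exits = "{y. y < p \<and> extra_in y \<notin> path_subtree}"
  have "Max ?exits \<in> ?exits" using assms by (intro Max_in) auto
  then show "Max ?exits < p" "extra_in (Max ?exits) \<notin> path_subtree" by auto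
  show "\<forall>y. Max ?exits + 1 \<le> y \<and> y < p \<longrightarrow> extra_in y \<in> path_subtree"
  proof (intro allI impI)
    fix y assume y: "Max ?exits + 1 \<le> y \<and> y < p"
    show "extra_in y \<in> path_subtree"
    proof (rule ccontr)
      assume "extra_in y \<notin> path_subtree"
      then have "y \<le> Max ?exits" using y by (intro Max_ge) auto
      then show False using y by simp
    qed
  qed
qed

lemma many_leaves_on_path:
  assumes "9 \<le> p"
  shows "\<exists>\<rho> VT AR. out_tree V A \<rho> VT AR \<and> p \<le> 8 * card (leaves VT AR \<inter> set P)"
proof (cases "\<exists>y < p. extra_in y \<notin> path_subtree")
  case False
  then obtain \<rho> VT AR where "out_tree V A \<rho> VT AR" "p \<le> 3 * card (leaves VT AR \<inter> set P) + 1"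
    using leaves_beyond[of 0] nonempty by auto
  then show ?thesis using assms by (intro exI[of _ \<rho>] exI[of _ VT] exI[of _ AR]) simp
next
  case True
  then obtain a where a: "a < p" "extra_in a \<notin> path_subtree"
    and beyond: "\<forall>y. a + 1 \<le> y \<and> y < p \<longrightarrow> extra_in y \<in> path_subtree"
    by (rule last_exit)
  obtain \<rho>1 VT1 AR1 where T1: "out_tree V A \<rho>1 VT1 AR1"
    and L1: "a + 1 \<le> 3 * card (leaves VT1 AR1 \<inter> set P)"
    using leaves_up_to_exit[OF a] by blast
  show ?thesis
  proof (cases "a + 1 < p")
    case False
    then show ?thesis using T1 L1 by (intro exI[of _ \<rho>1] exI[of _ VT1] exI[of _ AR1]) simp
  next
    case True
    obtain \<rho>2 VT2 AR2 where T2: "out_tree V A \<rho>2 VT2 AR2"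
      and L2: "p \<le> 3 * card (leaves VT2 AR2 \<inter> set P) + (a + 1) + 1"
      using leaves_beyond[OF True beyond] by blast
    show ?thesis
    proof (cases "card (leaves VT2 AR2 \<inter> set P) \<le> card (leaves VT1 AR1 \<inter> set P)")
      case True
      then show ?thesis using T1 L1 L2 assms by (intro exI[of _ \<rho>1] exI[of _ VT1] exI[of _ AR1]) simp
    next
      case False
      then show ?thesis using T2 L1 L2 assms by (intro exI[of _ \<rho>2] exI[of _ VT2] exI[of _ AR2]) simp
    qed
  qed
qed

end

theorem lemma2:
  fixes V :: "'a set" and A :: "('a \<times> 'a) set" and r :: 'a
    and AT :: "('a \<times> 'a) set" and P :: "'a list"
  assumes D: "digraph V A"
    and T: "out_branching V A r AT"
    and path: "dipath AT P"
    and no_long_arcs: "\<forall>i j. i + 1 < j \<and> j < length P \<longrightarrow> (P ! i, P ! j) \<notin> A"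
    and no_branch: "\<forall>v \<in> set P. v \<notin> branch_vertices V AT"
    and in_nbr: "\<forall>i < length P. \<exists>u. (u, P ! i) \<in> A
                    \<and> (i > 0 \<longrightarrow> u \<noteq> P ! (i - 1))
                    \<and> (i + 1 < length P \<longrightarrow> u \<noteq> P ! (i + 1))"
  shows "\<exists>r' VT' AT'. out_tree V A r' VT' AT' \<and>
           length P \<le> 8 * card (leaves VT' AT' \<inter> set P)"
proof (cases "9 \<le> length P")
  case True
  then have "bare_path V A r AT P"
    using assms unfolding bare_path_def bare_path_axioms_def out_branching_digraph_def by auto
  then show ?thesis by (rule bare_path.many_leaves_on_path[OF _ True])
next
  case False
  show ?thesis
  proof (cases "P = []")
    case True
    have "out_tree V A r {r} {}"
      using T out_tree_singleton unfolding out_branching_def out_tree_def by blast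
    then show ?thesis using True by auto
  next
    case False
    then have "P ! 0 \<in> V" "leaves {P ! 0} {} \<inter> set P = {P ! 0}"
      using in_nbr D unfolding digraph_def leaves_def by auto
    then show ?thesis using out_tree_singleton \<open>\<not> 9 \<le> length P\<close>
      by (intro exI[of _ "P ! 0"] exI[of _ "{P ! 0}"] exI[of _ "{}"]) simp
  qed
qed

end
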